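(* Assume $\delta\in(0,1]$. Consider a subcritical sequence of action profiles $(\mathbf p,\mathbf q)$ (not necessarily equilibria) such that $\sup_n\max_i\iota(q_i,q_i)\,n<\infty$. Then the limiting probability that a firm learns $y$ ideas decays exponentially in $y$: there exist constants $C>0$ and $y_0$ such that for every integer $y\ge y_0$, $$\limsup_{n\to\infty}\max_i\mathbb P\big[|I_i(\mathbf p,\mathbf q)|=y\big]\le e^{-Cy}.$$
   Context: Model (for each number of firms $n\ge 2$). There are $n$ firms $1,\dots,n$; firm $i$ can discover a single idea, also labelled $i$. A parameter $\delta\in[0,1]$ is fixed. Each firm $i$ has an action $(p_i,q_i)\in[0,1)\times[0,1]$. Idea $i$ is discovered independently with probability $p_i$; $I$ is the random set of discovered ideas. The interaction rate is $\iota(q_i,q_j)=q_iq_j$. For each ordered pair $i\neq j$, independently, $i$ learns directly from $j$ with probability $\iota(q_i,q_j)$, and conditional on this, independently with probability $\delta$, $i$ also learns indirectly through $j$. The indirect-learning network has an edge $j\to i$ whenever $i$ learns indirectly through $j$. $I_i(\mathbf p,\mathbf q)=\{j\in I\setminus\{i\}:$ some firm $m$, with $m=i$ or with a directed path from $m$ to $i$ in the indirect-learning network, learns directly from $j\}$. Criticality: let $\lambda$ be the spectral radius of the $n\times n$ matrix with $(i,j)$ entry $\delta\iota(q_i,q_j)$; a sequence (indexed by $n\to\infty$) of profiles is subcritical if $\limsup_n\lambda<1$. *)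

theory Defs
  imports "HOL-Probability.Probability" "Jordan_Normal_Form.Spectral_Radius"
begin

text \<open>Firms are indexed by 0,...,n-1. An outcome of the random experiment is a triple
  (disc, dir, ind): disc j = idea j is discovered; dir (i,j) = firm i learns directly
  from firm j; ind (i,j) = the independent coin of probability delta deciding whether i
  also learns indirectly through j (only relevant when dir (i,j) holds).\<close>

type_synonym outcome = "(nat \<Rightarrow> bool) \<times> (nat \<times> nat \<Rightarrow> bool) \<times> (nat \<times> nat \<Rightarrow> bool)"

definition ordered_pairs :: "nat \<Rightarrow> (nat \<times> nat) set" where
  "ordered_pairs n = {(i,j). i < n \<and> j < n \<and> i \<noteq> j}"

definition iota :: "real \<Rightarrow> real \<Rightarrow> real" where
  "iota a b = a * b"

definition outcome_pmf :: "nat \<Rightarrow> real \<Rightarrow> (nat \<Rightarrow> real) \<Rightarrow> (nat \<Rightarrow> real) \<Rightarrow> outcome pmf" where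
  "outcome_pmf n \<delta> p q =
     pair_pmf (Pi_pmf {..<n} False (\<lambda>j. bernoulli_pmf (p j)))
       (pair_pmf (Pi_pmf (ordered_pairs n) False (\<lambda>(i,j). bernoulli_pmf (iota (q i) (q j))))
                 (Pi_pmf (ordered_pairs n) False (\<lambda>_. bernoulli_pmf \<delta>)))"

definition indirect_edges :: "nat \<Rightarrow> outcome \<Rightarrow> (nat \<times> nat) set" where
  "indirect_edges n \<omega> = {(j,i). (i,j) \<in> ordered_pairs n \<and> fst (snd \<omega>) (i,j) \<and> snd (snd \<omega>) (i,j)}"

definition learned_ideas :: "nat \<Rightarrow> nat \<Rightarrow> outcome \<Rightarrow> nat set" where
  "learned_ideas n i \<omega> = {j. j < n \<and> fst \<omega> j \<and> j \<noteq> i \<and>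
      (\<exists>m. (m,i) \<in> (indirect_edges n \<omega>)\<^sup>* \<and> (m,j) \<in> ordered_pairs n \<and> fst (snd \<omega>) (m,j))}"

definition prob_learn :: "nat \<Rightarrow> real \<Rightarrow> (nat \<Rightarrow> real) \<Rightarrow> (nat \<Rightarrow> real) \<Rightarrow> nat \<Rightarrow> nat \<Rightarrow> real" where
  "prob_learn n \<delta> p q i y = measure_pmf.prob (outcome_pmf n \<delta> p q) {\<omega>. card (learned_ideas n i \<omega>) = y}"

definition interaction_matrix :: "nat \<Rightarrow> real \<Rightarrow> (nat \<Rightarrow> real) \<Rightarrow> complex mat" where
  "interaction_matrix n \<delta> q = mat n n (\<lambda>(i,j). complex_of_real (\<delta> * iota (q i) (q j)))"

definition subcritical :: "real \<Rightarrow> (nat \<Rightarrow> nat \<Rightarrow> real) \<Rightarrow> bool" where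
  "subcritical \<delta> q \<longleftrightarrow> limsup (\<lambda>n. ereal (spectral_radius (interaction_matrix n \<delta> (q n)))) < 1"

end

theory Submission
  imports Defs
begin

text \<open>Whatever ideas are discovered, \<open>|I_i|\<close> is at most the total number of direct contacts
  of the firms from which \<open>i\<close> can be reached in the indirect-learning network (the ancestor load).
  Explore these ancestors one firm at a time: revealing the links of a firm \<open>w\<close> costs
  \<open>z ^ deg w\<close> and adds the firms \<open>w\<close> learns indirectly through to the frontier. With the potential
  \<open>exp (a * \<Sum> q)\<close> over the frontier the exploration is a supermartingale as soon as the vertex
  condition \<open>E [z ^ deg w * exp (a * \<Sum>parents q)] \<le> exp (a * q w)\<close> holds, so that
  \<open>E [z ^ load] \<le> exp (a * q i)\<close> and Markov's inequality gives a geometric tail \<open>exp (a * q i) / z ^ y\<close>.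
  The vertex condition holds uniformly in \<open>n\<close> for \<open>a = b / sqrt (B / n)\<close> and \<open>z\<close> close to 1, because
  \<open>n * q j ^ 2 \<le> B\<close> and \<open>\<delta> * \<Sum> q j ^ 2\<close> is an eigenvalue of the rank-one interaction matrix,
  hence eventually below some \<open>L < 1\<close> by subcriticality.\<close>

lemma pair_pmf_Pi_pmf:
  assumes "finite A"
  shows "pair_pmf (Pi_pmf A d1 p1) (Pi_pmf A d2 p2) =
    map_pmf (\<lambda>c. (\<lambda>x. fst (c x), \<lambda>x. snd (c x))) (Pi_pmf A (d1, d2) (\<lambda>x. pair_pmf (p1 x) (p2 x)))"
    (is "?P = map_pmf ?split ?M")
proof (rule pmf_eqI)
  fix fg :: "('a \<Rightarrow> 'b) \<times> ('a \<Rightarrow> 'c)"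
  obtain f g where "fg = (f, g)" by (cases fg)
  then have fg: "fg = ?split (\<lambda>x. (f x, g x))" by simp
  have "inj ?split" by (auto simp: inj_def fun_eq_iff prod_eq_iff)
  then have "pmf (map_pmf ?split ?M) fg = pmf ?M (\<lambda>x. (f x, g x))"
    unfolding fg by (rule pmf_map_inj')
  also have "\<dots> = pmf ?P fg"
    using assms by (auto simp: fg pmf_pair pmf_Pi prod.distrib)
  finally show "pmf ?P fg = pmf (map_pmf ?split ?M) fg" by simp
qed

lemma nn_integral_Pi_pmf_split:
  assumes "finite A" "B \<subseteq> A"
  shows "(\<integral>\<^sup>+c. f c \<partial>Pi_pmf A d p) =
    (\<integral>\<^sup>+x. \<integral>\<^sup>+y. f (\<lambda>i. if i \<in> B then x i else y i) \<partial>Pi_pmf (A - B) d p \<partial>Pi_pmf B d p)"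
proof -
  have "Pi_pmf A d p = Pi_pmf (B \<union> (A - B)) d p"
    using assms by (simp add: Un_absorb1)
  also have "\<dots> = map_pmf (\<lambda>(f, g) x. if x \<in> B then f x else g x)
                     (pair_pmf (Pi_pmf B d p) (Pi_pmf (A - B) d p))"
    using assms by (intro Pi_pmf_union) (auto intro: finite_subset)
  finally show ?thesis by (simp add: nn_integral_pair_pmf')
qed

lemma nn_integral_Pi_pmf_subset:
  assumes "finite A" "B \<subseteq> A" "\<And>c. f (\<lambda>i. if i \<in> B then c i else d) = f c"
  shows "(\<integral>\<^sup>+c. f c \<partial>Pi_pmf B d p) = (\<integral>\<^sup>+c. f c \<partial>Pi_pmf A d p)"
  by (simp add: Pi_pmf_subset[OF assms(1,2)] assms(3))

lemma measure_pmf_power_Markov: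
  fixes M :: "'a pmf" and z K :: real
  assumes "1 \<le> z" "(\<integral>\<^sup>+c. ennreal (z ^ T c) \<partial>M) \<le> ennreal K" "0 \<le> K"
  shows "measure_pmf.prob M {c. y \<le> T c} \<le> K / z ^ y"
proof -
  have zy: "0 < z ^ y" using assms(1) by simp
  have "ennreal (z ^ y) * emeasure M {c. y \<le> T c} = (\<integral>\<^sup>+c. ennreal (z ^ y) * indicator {c. y \<le> T c} c \<partial>M)"
    by (simp add: nn_integral_cmult_indicator)
  also have "\<dots> \<le> (\<integral>\<^sup>+c. ennreal (z ^ T c) \<partial>M)"
    by (intro nn_integral_mono) (auto simp: indicator_def intro!: ennreal_leI power_increasing assms(1))
  also have "\<dots> \<le> ennreal K" by (rule assms(2))
  finally have "ennreal (z ^ y * measure_pmf.prob M {c. y \<le> T c}) \<le> ennreal K"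
    using zy by (simp add: measure_pmf.emeasure_eq_measure ennreal_mult)
  then have "z ^ y * measure_pmf.prob M {c. y \<le> T c} \<le> K"
    using assms(3) by (simp add: ennreal_le_iff)
  then show ?thesis using zy by (simp add: field_simps)
qed

lemma exp_minus_one_le: "0 \<le> (x::real) \<Longrightarrow> exp x - 1 \<le> x * exp x"
proof -
  assume "0 \<le> x"
  have "1 + (-x) \<le> exp (-x)" by (rule exp_ge_add_one_self)
  then have "(1 - x) * exp x \<le> exp (-x) * exp x" by (intro mult_right_mono) auto
  then show ?thesis by (simp add: exp_minus field_simps)
qed

lemma finite_ordered_pairs: "finite (ordered_pairs n)"
  by (rule finite_subset[of _ "{..<n} \<times> {..<n}"]) (auto simp: ordered_pairs_def)

text \<open>\<open>c (i, j) = (d, e)\<close>: firm \<open>i\<close> learns directly from \<open>j\<close> iff \<open>d\<close>, and then also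
  indirectly through \<open>j\<close> iff \<open>e\<close>.\<close>

type_synonym links = "nat \<times> nat \<Rightarrow> bool \<times> bool"

definition indirect_links :: "nat \<Rightarrow> nat set \<Rightarrow> links \<Rightarrow> (nat \<times> nat) set" where
  "indirect_links n U c = {(j, i). j \<in> U \<and> i \<in> U \<and> (i, j) \<in> ordered_pairs n \<and> c (i, j) = (True, True)}"

definition ancestors :: "nat \<Rightarrow> nat set \<Rightarrow> nat set \<Rightarrow> links \<Rightarrow> nat set" where
  "ancestors n U W c = {m. \<exists>w\<in>W. (m, w) \<in> (indirect_links n U c)\<^sup>*}"

definition direct_degree :: "nat \<Rightarrow> links \<Rightarrow> nat \<Rightarrow> nat" where
  "direct_degree n c m = card {j. j < n \<and> j \<noteq> m \<and> fst (c (m, j))}"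

definition ancestor_load :: "nat \<Rightarrow> nat set \<Rightarrow> nat set \<Rightarrow> links \<Rightarrow> nat" where
  "ancestor_load n U W c = (\<Sum>m\<in>ancestors n U W c. direct_degree n c m)"

definition indirect_parents :: "nat \<Rightarrow> links \<Rightarrow> nat \<Rightarrow> nat set \<Rightarrow> nat set" where
  "indirect_parents n c w U = {u\<in>U. (w, u) \<in> ordered_pairs n \<and> c (w, u) = (True, True)}"

lemma ancestors_subset: "W \<subseteq> U \<Longrightarrow> ancestors n U W c \<subseteq> U"
proof
  fix m assume W: "W \<subseteq> U" and "m \<in> ancestors n U W c"
  then obtain w where w: "w \<in> W" "(m, w) \<in> (indirect_links n U c)\<^sup>*" by (auto simp: ancestors_def)
  from w(2) show "m \<in> U"
    by (cases rule: converse_rtranclE) (use w W in \<open>auto simp: indirect_links_def\<close>)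
qed

lemma ancestors_remove:
  assumes "w \<in> W" "W \<subseteq> U"
  shows "ancestors n U W c \<subseteq>
    insert w (ancestors n (U - {w}) ((W - {w}) \<union> indirect_parents n c w (U - {w})) c)"
proof
  let ?W' = "(W - {w}) \<union> indirect_parents n c w (U - {w})"
  let ?R' = "indirect_links n (U - {w}) c"
  fix m assume "m \<in> ancestors n U W c"
  then obtain t where t: "t \<in> W" "(m, t) \<in> (indirect_links n U c)\<^sup>*" by (auto simp: ancestors_def)
  have sub: "?W' \<subseteq> U - {w}" using assms by (auto simp: indirect_parents_def)
  from t(2) have "m = w \<or> m \<in> ancestors n (U - {w}) ?W' c"
  proof (induction rule: converse_rtrancl_induct)
    case base
    then show ?case using t(1) by (auto simp: ancestors_def)
  next
    case (step m y)
    show ?case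
    proof (cases "m = w")
      case False
      from step.IH show ?thesis
      proof
        assume "y = w"
        then have "m \<in> indirect_parents n c w (U - {w})"
          using step.hyps(1) False by (auto simp: indirect_links_def indirect_parents_def)
        then show ?thesis by (auto simp: ancestors_def)
      next
        assume y: "y \<in> ancestors n (U - {w}) ?W' c"
        then obtain t' where t': "t' \<in> ?W'" "(y, t') \<in> ?R'\<^sup>*" by (auto simp: ancestors_def)
        have "y \<in> U - {w}" using y ancestors_subset[OF sub] by auto
        with step.hyps(1) False have "(m, y) \<in> ?R'" by (auto simp: indirect_links_def)
        with t' show ?thesis
          unfolding ancestors_def by (blast intro: converse_rtrancl_into_rtrancl)
      qed
    qed simp
  qed
  then show "m \<in> insert w (ancestors n (U - {w}) ?W' c)" by auto
qed

lemma ancestor_load_remove: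
  assumes "finite U" "w \<in> W" "W \<subseteq> U"
  shows "ancestor_load n U W c \<le>
    direct_degree n c w + ancestor_load n (U - {w}) ((W - {w}) \<union> indirect_parents n c w (U - {w})) c"
proof -
  let ?A = "ancestors n (U - {w}) ((W - {w}) \<union> indirect_parents n c w (U - {w})) c"
  have "?A \<subseteq> U - {w}"
    using assms by (intro ancestors_subset) (auto simp: indirect_parents_def)
  then have fA: "finite ?A" using assms(1) by (auto intro: finite_subset)
  have "ancestor_load n U W c \<le> (\<Sum>m\<in>insert w ?A. direct_degree n c m)"
    unfolding ancestor_load_def
    by (rule sum_mono2) (use fA ancestors_remove[OF assms(2,3)] in auto)
  also have "\<dots> \<le> direct_degree n c w + (\<Sum>m\<in>?A. direct_degree n c m)"
    using fA by (simp add: sum.insert_if)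
  finally show ?thesis unfolding ancestor_load_def .
qed

lemma direct_degree_cong:
  "(\<And>j. j < n \<Longrightarrow> j \<noteq> w \<Longrightarrow> c (w, j) = c' (w, j)) \<Longrightarrow> direct_degree n c w = direct_degree n c' w"
  unfolding direct_degree_def by (metis (no_types, lifting))

lemma indirect_parents_cong:
  "(\<And>j. j < n \<Longrightarrow> j \<noteq> w \<Longrightarrow> c (w, j) = c' (w, j)) \<Longrightarrow> indirect_parents n c w U = indirect_parents n c' w U"
  unfolding indirect_parents_def ordered_pairs_def by auto

lemma ancestor_load_cong:
  assumes "W \<subseteq> U" "\<And>i j. i \<in> U \<Longrightarrow> j < n \<Longrightarrow> j \<noteq> i \<Longrightarrow> c (i, j) = c' (i, j)"
  shows "ancestor_load n U W c = ancestor_load n U W c'"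
proof -
  have "indirect_links n U c = indirect_links n U c'"
    using assms(2) by (auto simp: indirect_links_def ordered_pairs_def)
  then have A: "ancestors n U W c = ancestors n U W c'" unfolding ancestors_def by simp
  show ?thesis unfolding ancestor_load_def A
    using ancestors_subset[OF assms(1), of n c'] assms(2)
    by (intro sum.cong refl direct_degree_cong) auto
qed

lemma card_learned_ideas_le_ancestor_load:
  assumes "i < n"
  shows "card (learned_ideas n i \<omega>) \<le>
    ancestor_load n {..<n} {i} (\<lambda>x. (fst (snd \<omega>) x, snd (snd \<omega>) x))"
proof -
  define c :: links where "c = (\<lambda>x. (fst (snd \<omega>) x, snd (snd \<omega>) x))"
  define A where "A = ancestors n {..<n} {i} c"
  define out where "out = (\<lambda>m. {j. j < n \<and> j \<noteq> m \<and> fst (c (m, j))})"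
  have fA: "finite A"
    unfolding A_def by (rule finite_subset[OF ancestors_subset]) (use assms in auto)
  have "indirect_edges n \<omega> \<subseteq> indirect_links n {..<n} c"
    by (auto simp: indirect_edges_def indirect_links_def c_def ordered_pairs_def)
  then have R: "(indirect_edges n \<omega>)\<^sup>* \<subseteq> (indirect_links n {..<n} c)\<^sup>*"
    by (rule rtrancl_mono)
  have "learned_ideas n i \<omega> \<subseteq> (\<Union>m\<in>A. out m)"
  proof
    fix j assume "j \<in> learned_ideas n i \<omega>"
    then obtain m where m: "(m, i) \<in> (indirect_edges n \<omega>)\<^sup>*" "(m, j) \<in> ordered_pairs n"
      "fst (snd \<omega>) (m, j)"
      unfolding learned_ideas_def by auto
    then have "m \<in> A" using R by (auto simp: A_def ancestors_def)
    with m show "j \<in> (\<Union>m\<in>A. out m)" by (auto simp: out_def c_def ordered_pairs_def)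
  qed
  then have "card (learned_ideas n i \<omega>) \<le> card (\<Union>m\<in>A. out m)"
    by (rule card_mono[rotated]) (use fA in \<open>auto simp: out_def\<close>)
  also have "\<dots> \<le> (\<Sum>m\<in>A. card (out m))"
    by (rule card_UN_le[OF fA])
  finally show ?thesis by (simp add: ancestor_load_def A_def direct_degree_def out_def c_def)
qed

definition link_pmf :: "real \<Rightarrow> (nat \<Rightarrow> real) \<Rightarrow> nat \<times> nat \<Rightarrow> (bool \<times> bool) pmf" where
  "link_pmf \<delta> q = (\<lambda>(i, j). pair_pmf (bernoulli_pmf (iota (q i) (q j))) (bernoulli_pmf \<delta>))"

definition links_pmf :: "nat \<Rightarrow> real \<Rightarrow> (nat \<Rightarrow> real) \<Rightarrow> links pmf" where
  "links_pmf n \<delta> q = Pi_pmf (ordered_pairs n) (False, False) (link_pmf \<delta> q)"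

lemma prob_learn_le_ancestor_load:
  assumes "i < n"
  shows "prob_learn n \<delta> p q i y \<le>
    measure_pmf.prob (links_pmf n \<delta> q) {c. y \<le> ancestor_load n {..<n} {i} c}"
proof -
  let ?g = "\<lambda>c::links. (\<lambda>x. fst (c x), \<lambda>x. snd (c x))"
  let ?load = "\<lambda>v. ancestor_load n {..<n} {i} (\<lambda>x. (fst v x, snd v x))"
  have "(\<lambda>x. pair_pmf ((\<lambda>(i, j). bernoulli_pmf (iota (q i) (q j))) x) ((\<lambda>_. bernoulli_pmf \<delta>) x))
      = link_pmf \<delta> q"
    by (auto simp: link_pmf_def fun_eq_iff split: prod.split)
  then have snd_outcome: "map_pmf snd (outcome_pmf n \<delta> p q) = map_pmf ?g (links_pmf n \<delta> q)"
    unfolding outcome_pmf_def links_pmf_def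
    by (simp add: pair_pmf_Pi_pmf[OF finite_ordered_pairs] map_snd_pair_pmf)
  have "prob_learn n \<delta> p q i y \<le> measure_pmf.prob (outcome_pmf n \<delta> p q) (snd -` {v. y \<le> ?load v})"
    unfolding prob_learn_def
    by (rule measure_pmf.finite_measure_mono)
       (use card_learned_ideas_le_ancestor_load[OF assms] in auto)
  also have "\<dots> = measure_pmf.prob (map_pmf snd (outcome_pmf n \<delta> p q)) {v. y \<le> ?load v}"
    by (simp add: measure_map_pmf)
  also have "\<dots> = measure_pmf.prob (links_pmf n \<delta> q) {c. y \<le> ancestor_load n {..<n} {i} c}"
    by (simp add: snd_outcome measure_map_pmf vimage_def)
  finally show ?thesis .
qed

lemma nn_integral_pair_bernoulli_pmf:
  fixes r \<delta> z e :: real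
  assumes "0 \<le> r" "r \<le> 1" "0 \<le> \<delta>" "\<delta> \<le> 1" "0 \<le> z" "0 \<le> e"
  shows "(\<integral>\<^sup>+v. ennreal ((if fst v then z else 1) * (if v = (True, True) then e else 1))
            \<partial>pair_pmf (bernoulli_pmf r) (bernoulli_pmf \<delta>))
         = ennreal (1 + r * (z * (1 - \<delta> + \<delta> * e) - 1))"
proof -
  have "(\<integral>\<^sup>+v. ennreal ((if fst v then z else 1) * (if v = (True, True) then e else 1))
            \<partial>pair_pmf (bernoulli_pmf r) (bernoulli_pmf \<delta>))
      = ennreal ((z * e * \<delta> + z * (1 - \<delta>)) * r + 1 * (1 - r))"
    using assms by (simp add: nn_integral_pair_pmf' ennreal_plus[symmetric] ennreal_mult[symmetric]
        del: ennreal_plus)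
  also have "(z * e * \<delta> + z * (1 - \<delta>)) * r + 1 * (1 - r) = 1 + r * (z * (1 - \<delta> + \<delta> * e) - 1)"
    by (simp add: algebra_simps)
  finally show ?thesis .
qed

definition out_pairs :: "nat \<Rightarrow> nat \<Rightarrow> (nat \<times> nat) set" where
  "out_pairs n w = Pair w ` {j. j < n \<and> j \<noteq> w}"

definition out_weight :: "nat \<Rightarrow> real \<Rightarrow> real \<Rightarrow> (nat \<Rightarrow> real) \<Rightarrow> links \<Rightarrow> nat \<Rightarrow> real" where
  "out_weight n z a q c w = (\<Prod>j | j < n \<and> j \<noteq> w.
     (if fst (c (w, j)) then z else 1) * (if c (w, j) = (True, True) then exp (a * q j) else 1))"

definition out_moment :: "nat \<Rightarrow> real \<Rightarrow> (nat \<Rightarrow> real) \<Rightarrow> real \<Rightarrow> real \<Rightarrow> nat \<Rightarrow> real" where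
  "out_moment n \<delta> q z a w =
     (\<Prod>j | j < n \<and> j \<noteq> w. 1 + q w * q j * (z * (1 - \<delta> + \<delta> * exp (a * q j)) - 1))"

lemma nn_integral_out_weight:
  assumes \<delta>: "0 \<le> \<delta>" "\<delta> \<le> 1" and q: "\<And>i. i < n \<Longrightarrow> 0 \<le> q i \<and> q i \<le> 1"
    and z: "0 \<le> z" and w: "w < n"
  shows "(\<integral>\<^sup>+c. ennreal (out_weight n z a q c w) \<partial>Pi_pmf (out_pairs n w) (False, False) (link_pmf \<delta> q))
       = ennreal (out_moment n \<delta> q z a w)"
proof -
  define J where "J = {j. j < n \<and> j \<noteq> w}"
  define h where "h = (\<lambda>(p::nat \<times> nat) (v::bool \<times> bool).
    (if fst v then z else 1) * (if v = (True, True) then exp (a * q (snd p)) else 1))"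
  have fJ: "finite J" by (auto simp: J_def)
  have inj: "inj_on (Pair w) J" by (auto simp: inj_on_def)
  have h_nonneg: "0 \<le> h p v" for p v using z by (auto simp: h_def)
  have r: "0 \<le> q w * q j" "q w * q j \<le> 1" if "j \<in> J" for j
    using q[of j] q[OF w] that by (auto simp: J_def intro: mult_le_one)
  have factor_nonneg: "0 \<le> 1 + q w * q j * (z * (1 - \<delta> + \<delta> * exp (a * q j)) - 1)" if "j \<in> J" for j
  proof -
    have "q w * q j * (-1) \<le> q w * q j * (z * (1 - \<delta> + \<delta> * exp (a * q j)) - 1)"
      using r[OF that] \<delta> z by (intro mult_left_mono) auto
    then show ?thesis using r[OF that] by linarith
  qed
  have "out_weight n z a q c w = (\<Prod>j\<in>J. h (w, j) (c (w, j)))" for c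
    by (simp only: out_weight_def h_def J_def snd_conv)
  then have "ennreal (out_weight n z a q c w) = (\<Prod>p\<in>Pair w ` J. ennreal (h p (c p)))" for c
    by (simp add: prod.reindex[OF inj] prod_ennreal h_nonneg)
  then have "(\<integral>\<^sup>+c. ennreal (out_weight n z a q c w) \<partial>Pi_pmf (out_pairs n w) (False, False) (link_pmf \<delta> q))
      = (\<integral>\<^sup>+c. (\<Prod>p\<in>Pair w ` J. ennreal (h p (c p))) \<partial>Pi_pmf (Pair w ` J) (False, False) (link_pmf \<delta> q))"
    by (simp add: out_pairs_def J_def)
  also have "\<dots> = (\<Prod>p\<in>Pair w ` J. \<integral>\<^sup>+v. ennreal (h p v) \<partial>link_pmf \<delta> q p)"
    using fJ by (intro nn_integral_prod_Pi_pmf) auto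
  also have "\<dots> = (\<Prod>j\<in>J. ennreal (1 + q w * q j * (z * (1 - \<delta> + \<delta> * exp (a * q j)) - 1)))"
    unfolding prod.reindex[OF inj] comp_def
  proof (rule prod.cong[OF refl])
    fix j assume "j \<in> J"
    then show "(\<integral>\<^sup>+v. ennreal (h (w, j) v) \<partial>link_pmf \<delta> q (w, j))
        = ennreal (1 + q w * q j * (z * (1 - \<delta> + \<delta> * exp (a * q j)) - 1))"
      using nn_integral_pair_bernoulli_pmf[OF r \<delta> z, of j "exp (a * q j)"]
      unfolding link_pmf_def h_def iota_def prod.case snd_conv by simp
  qed
  also have "\<dots> = ennreal (out_moment n \<delta> q z a w)"
    unfolding out_moment_def J_def[symmetric] by (rule prod_ennreal) (rule factor_nonneg)
  finally show ?thesis .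
qed

lemma out_weight_ge:
  assumes z: "1 \<le> z" and a: "0 \<le> a" and q: "\<And>j. j < n \<Longrightarrow> 0 \<le> q j"
  shows "z ^ direct_degree n c w * exp (a * (\<Sum>u\<in>indirect_parents n c w U. q u)) \<le> out_weight n z a q c w"
proof -
  define J where "J = {j. j < n \<and> j \<noteq> w}"
  have fJ: "finite J" by (simp add: J_def)
  have "direct_degree n c w = card {j\<in>J. fst (c (w, j))}"
    by (simp add: direct_degree_def J_def conj_assoc)
  then have degree: "z ^ direct_degree n c w = (\<Prod>j\<in>J. if fst (c (w, j)) then z else 1)"
    using fJ by (simp add: prod.inter_filter[symmetric])
  have "(\<Sum>u\<in>indirect_parents n c w U. q u) \<le> (\<Sum>u\<in>{j\<in>J. c (w, j) = (True, True)}. q u)"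
    by (rule sum_mono2) (use fJ q in \<open>auto simp: indirect_parents_def J_def ordered_pairs_def\<close>)
  then have "exp (a * (\<Sum>u\<in>indirect_parents n c w U. q u))
      \<le> exp (a * (\<Sum>u\<in>{j\<in>J. c (w, j) = (True, True)}. q u))"
    using a by (simp add: mult_left_mono)
  also have "\<dots> = (\<Prod>j\<in>J. if c (w, j) = (True, True) then exp (a * q j) else 1)"
    using fJ by (simp add: exp_sum sum_distrib_left prod.inter_filter)
  finally show ?thesis
    unfolding degree out_weight_def J_def[symmetric] prod.distrib
    by (rule mult_left_mono) (use z in \<open>auto intro: prod_nonneg\<close>)
qed

lemma out_weight_ge_Un:
  assumes z: "1 \<le> z" and a: "0 \<le> a" and q: "\<And>j. j < n \<Longrightarrow> 0 \<le> q j" and V: "finite V"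
  shows "z ^ direct_degree n c w * exp (a * (\<Sum>u\<in>V \<union> indirect_parents n c w U. q u))
    \<le> exp (a * (\<Sum>u\<in>V. q u)) * out_weight n z a q c w"
proof -
  let ?N = "indirect_parents n c w U"
  have N: "?N \<subseteq> {..<n}" by (auto simp: indirect_parents_def ordered_pairs_def)
  then have "(\<Sum>u\<in>V \<union> ?N. q u) \<le> (\<Sum>u\<in>V. q u) + (\<Sum>u\<in>?N. q u)"
    using V q by (subst sum_Un) (auto intro!: sum_nonneg dest: finite_subset)
  then have "exp (a * (\<Sum>u\<in>V \<union> ?N. q u)) \<le> exp (a * (\<Sum>u\<in>V. q u)) * exp (a * (\<Sum>u\<in>?N. q u))"
    using a by (simp add: distrib_left[symmetric] mult_left_mono exp_add[symmetric])
  then have "z ^ direct_degree n c w * exp (a * (\<Sum>u\<in>V \<union> ?N. q u))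
      \<le> exp (a * (\<Sum>u\<in>V. q u)) * (z ^ direct_degree n c w * exp (a * (\<Sum>u\<in>?N. q u)))"
    using z by (simp add: mult.left_commute mult_left_mono)
  also have "\<dots> \<le> exp (a * (\<Sum>u\<in>V. q u)) * out_weight n z a q c w"
    using out_weight_ge[OF z a q] by simp
  finally show ?thesis .
qed

lemma ancestor_load_merge_le:
  assumes "finite U" "w \<in> W" "W \<subseteq> U"
  shows "ancestor_load n U W (\<lambda>i. if i \<in> out_pairs n w then x i else y i)
    \<le> direct_degree n x w + ancestor_load n (U - {w}) ((W - {w}) \<union> indirect_parents n x w (U - {w})) y"
proof -
  let ?c = "\<lambda>i. if i \<in> out_pairs n w then x i else y i"
  have agree: "\<And>j. j < n \<Longrightarrow> j \<noteq> w \<Longrightarrow> ?c (w, j) = x (w, j)"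
    by (auto simp: out_pairs_def)
  have rest: "ancestor_load n (U - {w}) V ?c = ancestor_load n (U - {w}) V y" if "V \<subseteq> U - {w}" for V
    using that by (intro ancestor_load_cong) (auto simp: out_pairs_def)
  have "ancestor_load n U W ?c \<le>
      direct_degree n ?c w + ancestor_load n (U - {w}) ((W - {w}) \<union> indirect_parents n ?c w (U - {w})) ?c"
    by (rule ancestor_load_remove[OF assms])
  also have "\<dots> = direct_degree n x w + ancestor_load n (U - {w}) ((W - {w}) \<union> indirect_parents n x w (U - {w})) y"
  proof -
    have "(W - {w}) \<union> indirect_parents n x w (U - {w}) \<subseteq> U - {w}"
      using assms(3) by (auto simp: indirect_parents_def)
    then show ?thesis
      by (simp add: direct_degree_cong[of n w ?c x, OF agree]
          indirect_parents_cong[of n w ?c x, OF agree] rest)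
  qed
  finally show ?thesis .
qed

lemma nn_integral_ancestor_load_indep_out_pairs:
  assumes "U \<subseteq> {..<n}" "w \<notin> U" "V \<subseteq> U"
  shows "(\<integral>\<^sup>+c. f (ancestor_load n U V c) \<partial>Pi_pmf (ordered_pairs n - out_pairs n w) (False, False) (link_pmf \<delta> q))
    = (\<integral>\<^sup>+c. f (ancestor_load n U V c) \<partial>links_pmf n \<delta> q)"
proof -
  have "ancestor_load n U V (\<lambda>i. if i \<in> ordered_pairs n - out_pairs n w then c i else (False, False))
      = ancestor_load n U V c" for c
    using assms by (intro ancestor_load_cong) (auto simp: out_pairs_def ordered_pairs_def)
  then show ?thesis
    unfolding links_pmf_def by (intro nn_integral_Pi_pmf_subset[OF finite_ordered_pairs]) auto
qed

lemma exp_moment_ancestor_load_step: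
  fixes \<delta> z a :: real and q :: "nat \<Rightarrow> real"
  assumes \<delta>: "0 \<le> \<delta>" "\<delta> \<le> 1" and q: "\<And>i. i < n \<Longrightarrow> 0 \<le> q i \<and> q i \<le> 1"
    and z: "1 \<le> z" and a: "0 \<le> a"
    and moment: "out_moment n \<delta> q z a w \<le> exp (a * q w)"
    and U: "U \<subseteq> {..<n}" and w: "w \<in> W" "W \<subseteq> U"
    and IH: "\<And>W'. W' \<subseteq> U - {w} \<Longrightarrow>
      (\<integral>\<^sup>+c. ennreal (z ^ ancestor_load n (U - {w}) W' c) \<partial>links_pmf n \<delta> q) \<le> ennreal (exp (a * (\<Sum>u\<in>W'. q u)))"
  shows "(\<integral>\<^sup>+c. ennreal (z ^ ancestor_load n U W c) \<partial>links_pmf n \<delta> q) \<le> ennreal (exp (a * (\<Sum>u\<in>W. q u)))"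
proof -
  define P where "P = Pi_pmf (out_pairs n w) (False, False) (link_pmf \<delta> q)"
  define R where "R = Pi_pmf (ordered_pairs n - out_pairs n w) (False, False) (link_pmf \<delta> q)"
  define W' where "W' = (\<lambda>x. (W - {w}) \<union> indirect_parents n x w (U - {w}))"
  define e0 where "e0 = exp (a * (\<Sum>u\<in>W - {w}. q u))"
  have wn: "w < n" using w U by auto
  have finU: "finite U" using U finite_subset by blast
  have finW: "finite W" using w(2) finU finite_subset by blast
  have out_sub: "out_pairs n w \<subseteq> ordered_pairs n"
    using wn by (auto simp: out_pairs_def ordered_pairs_def)
  have W'_sub: "W' x \<subseteq> U - {w}" for x
    using w by (auto simp: W'_def indirect_parents_def)
  have rest: "(\<integral>\<^sup>+y. ennreal (z ^ ancestor_load n (U - {w}) (W' x) y) \<partial>R) \<le> ennreal (exp (a * (\<Sum>u\<in>W' x. q u)))"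
    for x
  proof -
    have "(\<integral>\<^sup>+y. ennreal (z ^ ancestor_load n (U - {w}) (W' x) y) \<partial>R)
        = (\<integral>\<^sup>+c. ennreal (z ^ ancestor_load n (U - {w}) (W' x) c) \<partial>links_pmf n \<delta> q)"
      unfolding R_def using U by (intro nn_integral_ancestor_load_indep_out_pairs W'_sub) auto
    with IH[OF W'_sub] show ?thesis by simp
  qed
  have explore: "ennreal (z ^ ancestor_load n U W (\<lambda>i. if i \<in> out_pairs n w then x i else y i))
      \<le> ennreal (z ^ direct_degree n x w) * ennreal (z ^ ancestor_load n (U - {w}) (W' x) y)" for x y
    using power_increasing[OF ancestor_load_merge_le[OF finU w] z] z
    by (simp add: W'_def power_add ennreal_mult[symmetric])
  have weight: "ennreal (z ^ direct_degree n x w) * ennreal (exp (a * (\<Sum>u\<in>W' x. q u)))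
      \<le> ennreal e0 * ennreal (out_weight n z a q x w)" for x
  proof -
    have "0 \<le> out_weight n z a q x w"
      unfolding out_weight_def using z by (intro prod_nonneg) auto
    then show ?thesis
      using out_weight_ge_Un[OF z a, where V = "W - {w}" and U = "U - {w}" and c = x and w = w] q z finW
      by (simp add: W'_def e0_def ennreal_mult[symmetric] ennreal_leI)
  qed
  have "(\<integral>\<^sup>+c. ennreal (z ^ ancestor_load n U W c) \<partial>links_pmf n \<delta> q)
      = (\<integral>\<^sup>+x. \<integral>\<^sup>+y. ennreal (z ^ ancestor_load n U W (\<lambda>i. if i \<in> out_pairs n w then x i else y i)) \<partial>R \<partial>P)"
    unfolding links_pmf_def P_def R_def by (rule nn_integral_Pi_pmf_split[OF finite_ordered_pairs out_sub])
  also have "\<dots> \<le> (\<integral>\<^sup>+x. ennreal (z ^ direct_degree n x w) *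
      (\<integral>\<^sup>+y. ennreal (z ^ ancestor_load n (U - {w}) (W' x) y) \<partial>R) \<partial>P)"
    by (intro nn_integral_mono) (simp add: nn_integral_cmult[symmetric] nn_integral_mono explore)
  also have "\<dots> \<le> (\<integral>\<^sup>+x. ennreal (z ^ direct_degree n x w) * ennreal (exp (a * (\<Sum>u\<in>W' x. q u))) \<partial>P)"
    by (intro nn_integral_mono mult_left_mono rest) simp
  also have "\<dots> \<le> (\<integral>\<^sup>+x. ennreal e0 * ennreal (out_weight n z a q x w) \<partial>P)"
    by (intro nn_integral_mono weight)
  also have "\<dots> = ennreal e0 * ennreal (out_moment n \<delta> q z a w)"
    using z by (simp add: nn_integral_cmult P_def nn_integral_out_weight[OF \<delta> q _ wn])
  also have "\<dots> \<le> ennreal e0 * ennreal (exp (a * q w))"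
    using moment by (intro mult_left_mono) auto
  also have "\<dots> = ennreal (exp (a * (\<Sum>u\<in>W. q u)))"
    using finW w by (simp add: e0_def ennreal_mult[symmetric] exp_add[symmetric] sum.remove distrib_left)
  finally show ?thesis .
qed

lemma exp_moment_ancestor_load:
  fixes \<delta> z a :: real and q :: "nat \<Rightarrow> real"
  assumes \<delta>: "0 \<le> \<delta>" "\<delta> \<le> 1" and q: "\<And>i. i < n \<Longrightarrow> 0 \<le> q i \<and> q i \<le> 1"
    and z: "1 \<le> z" and a: "0 \<le> a"
    and moment: "\<And>w. w < n \<Longrightarrow> out_moment n \<delta> q z a w \<le> exp (a * q w)"
    and "U \<subseteq> {..<n}" "W \<subseteq> U"
  shows "(\<integral>\<^sup>+c. ennreal (z ^ ancestor_load n U W c) \<partial>links_pmf n \<delta> q) \<le> ennreal (exp (a * (\<Sum>u\<in>W. q u)))"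
  using assms(7,8)
proof (induction "card U" arbitrary: U W rule: less_induct)
  case less
  show ?case
  proof (cases "W = {}")
    case True
    then show ?thesis by (simp add: ancestor_load_def ancestors_def measure_pmf.emeasure_space_1)
  next
    case False
    then obtain w where w: "w \<in> W" by auto
    have "finite U" using less.prems finite_subset by blast
    then have "card (U - {w}) < card U" using w less.prems by (meson card_Diff1_less subsetD)
    then show ?thesis
      using less.prems w by (intro exp_moment_ancestor_load_step[OF \<delta> q z a moment]) (auto intro: less.hyps)
  qed
qed

lemma out_moment_le_exp:
  fixes q :: "nat \<Rightarrow> real"
  assumes \<delta>: "0 \<le> \<delta>" and q: "\<And>j. j < n \<Longrightarrow> 0 \<le> q j" and z: "1 \<le> z" and a: "0 \<le> a"
    and b: "\<And>j. j < n \<Longrightarrow> a * q j \<le> b"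
    and drift: "(z - 1) * (\<Sum>j<n. q j) + z * exp b * a * (\<delta> * (\<Sum>j<n. q j ^ 2)) \<le> a"
    and w: "w < n"
  shows "out_moment n \<delta> q z a w \<le> exp (a * q w)"
proof -
  define X where "X = (\<lambda>j. z * (1 - \<delta> + \<delta> * exp (a * q j)) - 1)"
  define J where "J = {j. j < n \<and> j \<noteq> w}"
  have X_nonneg: "0 \<le> X j" if "j < n" for j
  proof -
    have "1 \<le> 1 - \<delta> + \<delta> * exp (a * q j)"
      using \<delta> q[OF that] a by (simp add: mult_le_cancel_left1)
    then have "1 * 1 \<le> z * (1 - \<delta> + \<delta> * exp (a * q j))"
      using z by (intro mult_mono) auto
    then show ?thesis by (simp add: X_def)
  qed
  have X_le: "X j \<le> (z - 1) + z * \<delta> * exp b * a * q j" if "j < n" for j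
  proof -
    have aq: "0 \<le> a * q j" using q[OF that] a by simp
    have "exp (a * q j) - 1 \<le> a * q j * exp (a * q j)" by (rule exp_minus_one_le[OF aq])
    also have "\<dots> \<le> a * q j * exp b" using b[OF that] aq by (intro mult_left_mono) auto
    finally have "z * \<delta> * (exp (a * q j) - 1) \<le> z * \<delta> * (a * q j * exp b)"
      using \<delta> z by (intro mult_left_mono) auto
    moreover have "X j = (z - 1) + z * \<delta> * (exp (a * q j) - 1)" by (simp add: X_def algebra_simps)
    ultimately show ?thesis by (simp add: algebra_simps)
  qed
  have "(\<Sum>j<n. q j * X j) \<le> (\<Sum>j<n. q j * ((z - 1) + z * \<delta> * exp b * a * q j))"
    by (rule sum_mono) (use q X_le in \<open>auto intro: mult_left_mono\<close>)
  also have "\<dots> = (\<Sum>j<n. (z - 1) * q j + (z * exp b * a * \<delta>) * q j ^ 2)"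
    by (rule sum.cong) (auto simp: algebra_simps power2_eq_square)
  also have "\<dots> = (z - 1) * (\<Sum>j<n. q j) + z * exp b * a * (\<delta> * (\<Sum>j<n. q j ^ 2))"
    by (simp add: sum.distrib sum_distrib_left mult.assoc)
  finally have sum_qX: "(\<Sum>j<n. q j * X j) \<le> a" using drift by linarith
  have "out_moment n \<delta> q z a w = (\<Prod>j\<in>J. 1 + q w * q j * X j)"
    by (simp add: out_moment_def X_def J_def)
  also have "\<dots> \<le> (\<Prod>j\<in>J. exp (q w * q j * X j))"
  proof (rule prod_mono)
    fix j assume "j \<in> J"
    then have "0 \<le> q w * q j * X j" using q w X_nonneg by (simp add: J_def)
    then show "0 \<le> 1 + q w * q j * X j \<and> 1 + q w * q j * X j \<le> exp (q w * q j * X j)"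
      by (simp add: add.commute exp_ge_add_one_self)
  qed
  also have "\<dots> = exp (q w * (\<Sum>j\<in>J. q j * X j))"
    by (simp add: J_def exp_sum sum_distrib_left mult.assoc)
  also have "\<dots> \<le> exp (q w * (\<Sum>j<n. q j * X j))"
    using q w X_nonneg by (auto simp: J_def intro!: mult_left_mono sum_mono2)
  also have "\<dots> \<le> exp (a * q w)"
    using mult_left_mono[OF sum_qX q[OF w]] by (simp add: mult.commute)
  finally show ?thesis .
qed

lemma spectral_radius_interaction_matrix_ge:
  fixes q :: "nat \<Rightarrow> real"
  assumes n: "0 < n" and \<delta>: "0 \<le> \<delta>"
  shows "\<delta> * (\<Sum>i<n. q i ^ 2) \<le> spectral_radius (interaction_matrix n \<delta> q)"
proof -
  let ?A = "interaction_matrix n \<delta> q"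
  define s where "s = (\<Sum>j<n. q j ^ 2)"
  define v where "v = vec n (\<lambda>i. complex_of_real (q i))"
  have A: "?A \<in> carrier_mat n n" by (simp add: interaction_matrix_def)
  show ?thesis
  proof (cases "\<forall>i<n. q i = 0")
    case True
    then show ?thesis using spectral_radius_mem_max(1)[OF A n] by auto
  next
    case False
    then obtain k where k: "k < n" "q k \<noteq> 0" by auto
    have v0: "v \<noteq> 0\<^sub>v n"
      using k by (auto simp: v_def dest: arg_cong[where f = "\<lambda>u. u $ k"])
    have Av: "?A *\<^sub>v v = complex_of_real (\<delta> * s) \<cdot>\<^sub>v v"
    proof (rule eq_vecI)
      fix i assume "i < dim_vec (complex_of_real (\<delta> * s) \<cdot>\<^sub>v v)"
      then have i: "i < n" by (simp add: v_def)
      have "(?A *\<^sub>v v) $ i = complex_of_real (\<Sum>j<n. \<delta> * iota (q i) (q j) * q j)"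
        using i by (simp add: interaction_matrix_def v_def scalar_prod_def lessThan_atLeast0)
      also have "(\<Sum>j<n. \<delta> * iota (q i) (q j) * q j) = \<delta> * s * q i"
        by (simp add: s_def iota_def sum_distrib_left sum_distrib_right power2_eq_square algebra_simps)
      finally show "(?A *\<^sub>v v) $ i = (complex_of_real (\<delta> * s) \<cdot>\<^sub>v v) $ i"
        using i by (simp add: v_def)
    qed (simp add: interaction_matrix_def v_def)
    have "eigenvalue ?A (complex_of_real (\<delta> * s))"
      unfolding eigenvalue_def eigenvector_def
      using A by (intro exI[of _ v]) (simp add: Av v0 carrier_matD(1), simp add: v_def)
    then have "cmod (complex_of_real (\<delta> * s)) \<le> spectral_radius ?A"
      by (intro spectral_radius_mem_max(2)[OF A n]) (auto simp: spectrum_def)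
    moreover have "0 \<le> \<delta> * s" using \<delta> by (simp add: s_def sum_nonneg)
    ultimately show ?thesis by (simp add: s_def del: of_real_mult of_real_sum of_real_power)
  qed
qed

lemma prob_learn_le_exp_moment:
  fixes \<delta> z a :: real and p q :: "nat \<Rightarrow> real"
  assumes \<delta>: "0 \<le> \<delta>" "\<delta> \<le> 1" and q: "\<And>i. i < n \<Longrightarrow> 0 \<le> q i \<and> q i \<le> 1"
    and z: "1 \<le> z" and a: "0 \<le> a"
    and moment: "\<And>w. w < n \<Longrightarrow> out_moment n \<delta> q z a w \<le> exp (a * q w)"
    and i: "i < n"
  shows "prob_learn n \<delta> p q i y \<le> exp (a * q i) / z ^ y"
proof -
  have "prob_learn n \<delta> p q i y \<le> measure_pmf.prob (links_pmf n \<delta> q) {c. y \<le> ancestor_load n {..<n} {i} c}"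
    by (rule prob_learn_le_ancestor_load[OF i])
  also have "\<dots> \<le> exp (a * q i) / z ^ y"
    using exp_moment_ancestor_load[OF \<delta> q z a moment, of "{..<n}" "{i}"] i
    by (intro measure_pmf_power_Markov[OF z]) auto
  finally show ?thesis .
qed

lemma prob_learn_le_power:
  fixes \<delta> B L b z :: real and p q :: "nat \<Rightarrow> real"
  assumes \<delta>: "0 \<le> \<delta>" "\<delta> \<le> 1" and q: "\<And>j. j < n \<Longrightarrow> 0 \<le> q j \<and> q j \<le> 1"
    and B: "0 < B" "\<And>j. j < n \<Longrightarrow> q j ^ 2 * real n \<le> B"
    and L: "\<delta> * (\<Sum>j<n. q j ^ 2) \<le> L"
    and b: "0 < b" and z: "1 \<le> z" and rate: "(z - 1) * B + z * exp b * L * b \<le> b"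
    and i: "i < n"
  shows "prob_learn n \<delta> p q i y \<le> exp b / z ^ y"
proof -
  define \<epsilon> where "\<epsilon> = sqrt (B / real n)"
  define a where "a = b / \<epsilon>"
  have \<epsilon>: "0 < \<epsilon>" "real n * \<epsilon>\<^sup>2 = B" using B i by (simp_all add: \<epsilon>_def)
  have a: "0 \<le> a" using b \<epsilon> by (simp add: a_def)
  have q_le: "q j \<le> \<epsilon>" if "j < n" for j
  proof -
    have "q j ^ 2 \<le> B / real n" using B(2)[OF that] that by (simp add: field_simps)
    then have "sqrt (q j ^ 2) \<le> \<epsilon>" unfolding \<epsilon>_def by (rule real_sqrt_le_mono)
    then show ?thesis using q[OF that] by simp
  qed
  have aq: "a * q j \<le> b" if "j < n" for j
    using mult_left_mono[OF q_le[OF that] a] \<epsilon> by (simp add: a_def)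
  have drift: "(z - 1) * (\<Sum>j<n. q j) + z * exp b * a * (\<delta> * (\<Sum>j<n. q j ^ 2)) \<le> a"
  proof -
    have "(z - 1) * (\<Sum>j<n. q j) \<le> (z - 1) * (real n * \<epsilon>)"
      using sum_mono[of "{..<n}" q "\<lambda>_. \<epsilon>"] q_le z by (intro mult_left_mono) auto
    moreover have "z * exp b * a * (\<delta> * (\<Sum>j<n. q j ^ 2)) \<le> z * exp b * a * L"
      using L z a by (intro mult_left_mono) auto
    moreover have "((z - 1) * (real n * \<epsilon>) + z * exp b * a * L) * \<epsilon> = (z - 1) * B + z * exp b * L * b"
      using \<epsilon> by (simp add: a_def power2_eq_square field_simps)
    then have "(z - 1) * (real n * \<epsilon>) + z * exp b * a * L \<le> a"
      using rate \<epsilon> by (simp add: a_def pos_le_divide_eq)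
    ultimately show ?thesis by linarith
  qed
  have "prob_learn n \<delta> p q i y \<le> exp (a * q i) / z ^ y"
    using q z a b aq drift
    by (intro prob_learn_le_exp_moment out_moment_le_exp \<delta> q z a i) auto
  also have "\<dots> \<le> exp b / z ^ y"
    using aq[OF i] z by (intro divide_right_mono) auto
  finally show ?thesis .
qed

lemma exists_decay_rate:
  fixes B L :: real
  assumes "0 < B" "0 \<le> L" "L < 1"
  obtains b z where "0 < b" "1 < z" "(z - 1) * B + z * exp b * L * b \<le> b"
proof
  define b where "b = ln (2 / (1 + L))"
  define \<kappa> where "\<kappa> = exp b * L"
  define z where "z = 1 + b * (1 - \<kappa>) / (B + b)"
  show b: "0 < b" using assms by (simp add: b_def)
  have \<kappa>: "\<kappa> < 1" using assms by (simp add: \<kappa>_def b_def field_simps)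
  show z: "1 < z" using assms b \<kappa> by (simp add: z_def)
  have "(z - 1) * (B + b) = b * (1 - \<kappa>)" using assms b by (simp add: z_def)
  moreover have "(z - 1) * (\<kappa> * b) \<le> (z - 1) * b"
    using z \<kappa> b by (intro mult_left_mono) auto
  ultimately show "(z - 1) * B + z * exp b * L * b \<le> b"
    by (simp add: \<kappa>_def algebra_simps)
qed

lemma power_decay_le_exp:
  fixes K z :: real
  assumes "0 < K" "1 < z"
  obtains C y0 where "0 < C" "\<And>y. y0 \<le> y \<Longrightarrow> K / z ^ y \<le> exp (- C * real y)"
proof
  define y0 where "y0 = nat \<lceil>2 * ln K / ln z\<rceil>"
  show "0 < ln z / 2" using assms by simp
  fix y assume "y0 \<le> y"
  then have "2 * ln K / ln z \<le> real y" by (simp add: y0_def)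
  then have "ln K - real y * ln z \<le> - (ln z / 2) * real y" using assms by (simp add: field_simps)
  moreover have "K / z ^ y = exp (ln K - real y * ln z)"
    using assms by (simp add: exp_diff exp_of_nat_mult)
  ultimately show "K / z ^ y \<le> exp (- (ln z / 2) * real y)" by simp
qed

lemma Limsup_Max_le:
  fixes f :: "nat \<Rightarrow> nat \<Rightarrow> real"
  assumes "eventually (\<lambda>n. \<forall>i<n. f n i \<le> c) sequentially"
  shows "limsup (\<lambda>n. ereal (Max (f n ` {..<n}))) \<le> ereal c"
proof (rule Limsup_bounded)
  show "eventually (\<lambda>n. ereal (Max (f n ` {..<n})) \<le> ereal c) sequentially"
    using assms eventually_gt_at_top[of 0]
    by eventually_elim (auto simp: lessThan_empty_iff)
qed

lemma subcritical_eventually_less: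
  assumes "subcritical \<delta> q"
  obtains L where "0 \<le> L" "L < 1"
    "eventually (\<lambda>n. spectral_radius (interaction_matrix n \<delta> (q n)) < L) sequentially"
proof -
  let ?sr = "\<lambda>n. ereal (spectral_radius (interaction_matrix n \<delta> (q n)))"
  obtain r where r: "limsup ?sr < r" "r < 1"
    using assms dense unfolding subcritical_def by blast
  then obtain L0 where L0: "r = ereal L0" by (cases r) auto
  define L where "L = max L0 0"
  have "limsup ?sr < ereal L"
    using r(1) L0 by (simp add: L_def less_le_trans)
  then have "eventually (\<lambda>n. ?sr n < ereal L) sequentially"
    by (rule Limsup_lessD)
  then have "eventually (\<lambda>n. spectral_radius (interaction_matrix n \<delta> (q n)) < L) sequentially"
    by simp
  moreover have "0 \<le> L" "L < 1" using r(2) L0 by (auto simp: L_def)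
  ultimately show ?thesis using that by blast
qed

theorem lemmaA4:
  fixes \<delta> :: real and p q :: "nat \<Rightarrow> nat \<Rightarrow> real"
  assumes "0 < \<delta>" and "\<delta> \<le> 1"
    and "\<And>n i. 2 \<le> n \<Longrightarrow> i < n \<Longrightarrow> 0 \<le> p n i \<and> p n i < 1"
    and "\<And>n i. 2 \<le> n \<Longrightarrow> i < n \<Longrightarrow> 0 \<le> q n i \<and> q n i \<le> 1"
    and "subcritical \<delta> q"
    and "\<exists>B. \<forall>n\<ge>2. \<forall>i<n. iota (q n i) (q n i) * real n \<le> B"
  shows "\<exists>C>0. \<exists>y0::nat. \<forall>y\<ge>y0.
           limsup (\<lambda>n. ereal (Max ((\<lambda>i. prob_learn n \<delta> (p n) (q n) i y) ` {..<n})))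
             \<le> ereal (exp (- C * real y))"
proof -
  obtain B0 where B0: "\<forall>n\<ge>2. \<forall>i<n. iota (q n i) (q n i) * real n \<le> B0"
    using assms(6) by blast
  define B where "B = max B0 1"
  have B: "0 < B" "\<And>n j. 2 \<le> n \<Longrightarrow> j < n \<Longrightarrow> q n j ^ 2 * real n \<le> B"
    using B0 by (fastforce simp: B_def iota_def power2_eq_square)+
  obtain L where L: "0 \<le> L" "L < 1"
    and radius: "eventually (\<lambda>n. spectral_radius (interaction_matrix n \<delta> (q n)) < L) sequentially"
    using subcritical_eventually_less[OF assms(5)] .
  obtain b z where b: "0 < b" and z: "1 < z" and rate: "(z - 1) * B + z * exp b * L * b \<le> b"
    using exists_decay_rate[OF B(1) L] .
  obtain C :: real and y0 :: nat where C: "0 < C" and decay: "\<And>y. y0 \<le> y \<Longrightarrow> exp b / z ^ y \<le> exp (- C * real y)"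
    using power_decay_le_exp[OF exp_gt_zero[of b] z] by blast
  have "eventually (\<lambda>n. \<forall>i<n. prob_learn n \<delta> (p n) (q n) i y \<le> exp (- C * real y)) sequentially"
    if "y0 \<le> y" for y
    using radius eventually_ge_at_top[of 2]
  proof eventually_elim
    case (elim n)
    then have "\<delta> * (\<Sum>j<n. q n j ^ 2) \<le> L"
      using spectral_radius_interaction_matrix_ge[of n \<delta> "q n"] assms(1) by simp
    with elim have "\<forall>i<n. prob_learn n \<delta> (p n) (q n) i y \<le> exp b / z ^ y"
      using assms(1,2,4) B b z rate by (auto intro!: prob_learn_le_power[where B = B and L = L])
    then show ?case using decay[OF that] by (auto intro: order_trans)
  qed
  then show ?thesis
    using C by (intro exI[of _ C] conjI exI[of _ y0] allI impI Limsup_Max_le) auto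
qed

end
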